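(* Let $\mathcal A$ be a transitive Lie algebroid over $M$ with kernel $\mathcal L$ and let $\widehat g$ be an inner non-degenerate metric on $\mathcal A$. Then there exists a unique ordinary connection $\nabla^{\widehat g}$ on $\mathcal A$ such that $\widehat g(\nabla^{\widehat g}_X,\iota(\gamma))=0$ for all $X\in\Gamma(TM)$ and all $\gamma\in\mathcal L$.
   Context: A transitive Lie algebroid over $M$ is a finitely generated projective $C^\infty(M)$-module $\mathcal A$ with a Lie bracket and a surjective $C^\infty(M)$-linear Lie morphism $\rho:\mathcal A\to\Gamma(TM)$ with $[X,fY]=f[X,Y]+(\rho(X)f)Y$; its kernel $\mathcal L=\ker\rho$ is the space of sections of a vector bundle $\mathbb L$ (a locally trivial bundle of Lie algebras), and $\iota:\mathcal L\to\mathcal A$ is the inclusion. A metric on $\mathcal A$ is a symmetric $C^\infty(M)$-bilinear map $\widehat g:\mathcal A\otimes_{C^\infty(M)}\mathcal A\to C^\infty(M)$ (not assumed non-degenerate). It is inner non-degenerate if $h(\gamma,\eta)=\widehat g(\iota\gamma,\iota\eta)$ is a non-degenerate metric on the vector bundle $\mathbb L$. An ordinary connection is a $C^\infty(M)$-linear map $\nabla:\Gamma(TM)\to\mathcal A$ with $\rho\circ\nabla=\mathrm{id}$. *)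

theory Defs
  imports Complex_Main "HOL-Library.Function_Algebras"
begin

text \<open>
  The ring of smooth functions
  C-infinity(M) is an abstract commutative real algebra 'r; the module of vector fields
  Gamma(TM) is an abstract 'r-module 't acting on 'r by derivations (act); the Lie
  algebroid A is an 'r-module 'a.
\<close>

text \<open>The free module R^n, realised inside nat => 'r as the maps vanishing from n on.\<close>
definition free_scale :: "'r::comm_ring_1 \<Rightarrow> (nat \<Rightarrow> 'r) \<Rightarrow> (nat \<Rightarrow> 'r)" where
  "free_scale r v = (\<lambda>k. r * v k)"

definition fg_projective :: "('r::comm_ring_1 \<Rightarrow> 'b::ab_group_add \<Rightarrow> 'b) \<Rightarrow> bool" where
  "fg_projective s \<longleftrightarrow> module s \<and>
     (\<exists>(n::nat) (i :: 'b \<Rightarrow> nat \<Rightarrow> 'r) (p :: (nat \<Rightarrow> 'r) \<Rightarrow> 'b).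
        module_hom s free_scale i \<and> module_hom free_scale s p \<and>
        (\<forall>b k. n \<le> k \<longrightarrow> i b k = 0) \<and> (\<forall>b. p (i b) = b))"

definition real_lie_bracket ::
  "('r::{comm_ring_1,real_algebra_1} \<Rightarrow> 'b::ab_group_add \<Rightarrow> 'b) \<Rightarrow> ('b \<Rightarrow> 'b \<Rightarrow> 'b) \<Rightarrow> bool" where
  "real_lie_bracket s br \<longleftrightarrow>
     (\<forall>x y z. br (x + y) z = br x z + br y z) \<and>
     (\<forall>(c::real) x y. br (s (of_real c) x) y = s (of_real c) (br x y)) \<and>
     (\<forall>x. br x x = 0) \<and>
     (\<forall>x y z. br x (br y z) + br y (br z x) + br z (br x y) = 0)"

text \<open>Vector fields: an f.g. projective 'r-module 't, a faithful R-linear action on 'r by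
  derivations, exhausting all derivations (Gamma(TM) = Der(C-infinity(M))), with the
  commutator Lie bracket.\<close>
definition vector_fields ::
  "('r::{comm_ring_1,real_algebra_1} \<Rightarrow> 't::ab_group_add \<Rightarrow> 't) \<Rightarrow> ('t \<Rightarrow> 'r \<Rightarrow> 'r) \<Rightarrow> ('t \<Rightarrow> 't \<Rightarrow> 't) \<Rightarrow> bool" where
  "vector_fields sT act brT \<longleftrightarrow>
     fg_projective sT \<and>
     (\<forall>X f g. act X (f + g) = act X f + act X g) \<and>
     (\<forall>X f g. act X (f * g) = f * act X g + g * act X f) \<and>
     (\<forall>X (c::real). act X (of_real c) = 0) \<and>
     (\<forall>X Y f. act (X + Y) f = act X f + act Y f) \<and>
     (\<forall>X h f. act (sT h X) f = h * act X f) \<and>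
     (\<forall>X Y. act X = act Y \<longrightarrow> X = Y) \<and>
     (\<forall>D. ((\<forall>f g. D (f + g) = D f + D g) \<and> (\<forall>f g. D (f * g) = f * D g + g * D f) \<and>
           (\<forall>(c::real). D (of_real c) = 0)) \<longrightarrow> (\<exists>X. act X = D)) \<and>
     real_lie_bracket sT brT \<and>
     (\<forall>X Y f. act (brT X Y) f = act X (act Y f) - act Y (act X f))"

definition transitive_lie_algebroid ::
  "('r::{comm_ring_1,real_algebra_1} \<Rightarrow> 't::ab_group_add \<Rightarrow> 't) \<Rightarrow> ('t \<Rightarrow> 'r \<Rightarrow> 'r) \<Rightarrow> ('t \<Rightarrow> 't \<Rightarrow> 't) \<Rightarrow>
   ('r \<Rightarrow> 'a::ab_group_add \<Rightarrow> 'a) \<Rightarrow> ('a \<Rightarrow> 'a \<Rightarrow> 'a) \<Rightarrow> ('a \<Rightarrow> 't) \<Rightarrow> bool" where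
  "transitive_lie_algebroid sT act brT sA brA \<rho> \<longleftrightarrow>
     vector_fields sT act brT \<and>
     fg_projective sA \<and>
     real_lie_bracket sA brA \<and>
     module_hom sA sT \<rho> \<and> surj \<rho> \<and>
     (\<forall>x y. \<rho> (brA x y) = brT (\<rho> x) (\<rho> y)) \<and>
     (\<forall>x y f. brA x (sA f y) = sA f (brA x y) + sA (act (\<rho> x) f) y)"

text \<open>The kernel L = ker rho (the inclusion iota is the identity on elements).\<close>
definition algebroid_kernel :: "('a \<Rightarrow> 't::ab_group_add) \<Rightarrow> 'a set" where
  "algebroid_kernel \<rho> = {x. \<rho> x = 0}"

definition algebroid_metric ::
  "('r::comm_ring_1 \<Rightarrow> 'a::ab_group_add \<Rightarrow> 'a) \<Rightarrow> ('a \<Rightarrow> 'a \<Rightarrow> 'r) \<Rightarrow> bool" where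
  "algebroid_metric sA g \<longleftrightarrow>
     (\<forall>x y. g x y = g y x) \<and>
     (\<forall>x y z. g (x + y) z = g x z + g y z) \<and>
     (\<forall>f x y. g (sA f x) y = f * g x y)"

text \<open>Inner non-degeneracy: h(gamma,eta) = g(iota gamma, iota eta) is a non-degenerate
  metric on L, i.e. gamma |-> h(gamma, -) is a bijection from L onto Hom_R(L, R).\<close>
definition inner_nondegenerate ::
  "('r::comm_ring_1 \<Rightarrow> 'a::ab_group_add \<Rightarrow> 'a) \<Rightarrow> ('a \<Rightarrow> 't::ab_group_add) \<Rightarrow> ('a \<Rightarrow> 'a \<Rightarrow> 'r) \<Rightarrow> bool" where
  "inner_nondegenerate sA \<rho> g \<longleftrightarrow>
     (\<forall>\<phi> :: 'a \<Rightarrow> 'r.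
        ((\<forall>x\<in>algebroid_kernel \<rho>. \<forall>y\<in>algebroid_kernel \<rho>. \<phi> (x + y) = \<phi> x + \<phi> y) \<and>
         (\<forall>f. \<forall>x\<in>algebroid_kernel \<rho>. \<phi> (sA f x) = f * \<phi> x)) \<longrightarrow>
        (\<exists>!\<gamma>. \<gamma> \<in> algebroid_kernel \<rho> \<and> (\<forall>\<eta>\<in>algebroid_kernel \<rho>. g \<gamma> \<eta> = \<phi> \<eta>)))"

definition ordinary_connection ::
  "('r::comm_ring_1 \<Rightarrow> 't::ab_group_add \<Rightarrow> 't) \<Rightarrow> ('r \<Rightarrow> 'a::ab_group_add \<Rightarrow> 'a) \<Rightarrow> ('a \<Rightarrow> 't) \<Rightarrow> ('t \<Rightarrow> 'a) \<Rightarrow> bool" where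
  "ordinary_connection sT sA \<rho> nabla \<longleftrightarrow> module_hom sT sA nabla \<and> (\<forall>X. \<rho> (nabla X) = X)"

end

theory Submission
  imports Defs
begin

text \<open>
  A splitting of the anchor exists because the module of vector fields is projective.  The
  inner metric identifies each functional g(a, -) on the kernel with a unique kernel element
  P a; since P depends R-linearly on a and g(a - P a, -) vanishes on the kernel, subtracting
  P from any splitting yields the orthogonal connection.  Two orthogonal connections differ
  by a kernel element orthogonal to the whole kernel, which is 0 by non-degeneracy.
\<close>

lemma sum_fun_apply: "(\<Sum>k\<in>A. f k) x = (\<Sum>k\<in>A. (f k x :: 'b::comm_monoid_add))"
  by (induct A rule: infinite_finite_induct) auto

lemma fg_projective_surj_hom_splits:
  fixes sT :: "'r::comm_ring_1 \<Rightarrow> 't::ab_group_add \<Rightarrow> 't"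
    and sA :: "'r \<Rightarrow> 'a::ab_group_add \<Rightarrow> 'a" and \<rho> :: "'a \<Rightarrow> 't"
  assumes fg: "fg_projective sT" and hom: "module_hom sA sT \<rho>" and su: "surj \<rho>"
  shows "\<exists>s. module_hom sT sA s \<and> (\<forall>X. \<rho> (s X) = X)"
proof -
  from fg obtain n and i :: "'t \<Rightarrow> nat \<Rightarrow> 'r" and p :: "(nat \<Rightarrow> 'r) \<Rightarrow> 't" where
    mT: "module sT" and hi: "module_hom sT free_scale i" and hp: "module_hom free_scale sT p"
    and van: "\<And>b k. n \<le> k \<Longrightarrow> i b k = 0" and pi: "\<And>b. p (i b) = b"
    unfolding fg_projective_def by blast
  interpret A: module sA using hom by (simp add: module_hom_def)
  interpret R: module_hom sA sT \<rho> by (rule hom)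
  interpret I: module_hom sT free_scale i by (rule hi)
  interpret P: module_hom free_scale sT p by (rule hp)
  define e where "e k = (\<lambda>j::nat. if j = k then (1::'r) else 0)" for k
  \<comment> \<open>lift the images of the standard basis vectors and extend linearly\<close>
  define a where "a k = inv \<rho> (p (e k))" for k
  have ra: "\<rho> (a k) = p (e k)" for k
    by (simp add: a_def su surj_f_inv_f)
  define s where "s X = (\<Sum>k<n. sA (i X k) (a k))" for X
  have decomp: "(\<Sum>k<n. free_scale (i X k) (e k)) = i X" for X
  proof
    fix j
    have "(\<Sum>k<n. free_scale (i X k) (e k)) j = (\<Sum>k<n. if k = j then i X k else 0)"
      unfolding sum_fun_apply free_scale_def e_def by (rule sum.cong) auto
    also have "\<dots> = i X j" using van by (simp add: sum.delta)
    finally show "(\<Sum>k<n. free_scale (i X k) (e k)) j = i X j" .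
  qed
  have "\<rho> (s X) = X" for X
  proof -
    have "\<rho> (s X) = (\<Sum>k<n. p (free_scale (i X k) (e k)))"
      by (simp add: s_def R.sum R.scale ra P.scale)
    also have "\<dots> = X" by (simp add: P.sum[symmetric] decomp pi)
    finally show ?thesis .
  qed
  moreover have "module_hom sT sA s"
    by unfold_locales
      (simp_all add: s_def I.add I.scale free_scale_def A.scale_left_distrib sum.distrib
        A.scale_sum_right)
  ultimately show ?thesis by blast
qed

lemma ordinary_connection_exists:
  assumes "transitive_lie_algebroid sT act brT sA brA \<rho>"
  obtains s where "ordinary_connection sT sA \<rho> s"
proof -
  from assms have "fg_projective sT" "module_hom sA sT \<rho>" "surj \<rho>"
    unfolding transitive_lie_algebroid_def vector_fields_def by blast+
  then show thesis
    using fg_projective_surj_hom_splits that unfolding ordinary_connection_def by blast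
qed

lemma algebroid_metric_diff_left:
  assumes "algebroid_metric sA g"
  shows "g (x - y) z = g x z - g y z"
  using assms unfolding algebroid_metric_def by (metis eq_diff_eq)

lemma inner_nondegenerate_ex1_representative:
  assumes "algebroid_metric sA g" and "inner_nondegenerate sA \<rho> g"
  shows "\<exists>!\<gamma>. \<gamma> \<in> algebroid_kernel \<rho> \<and> (\<forall>\<eta>\<in>algebroid_kernel \<rho>. g \<gamma> \<eta> = g a \<eta>)"
proof -
  from assms(1) have "\<forall>x y. g a (x + y) = g a x + g a y" "\<forall>f x. g a (sA f x) = f * g a x"
    unfolding algebroid_metric_def by metis+
  with assms(2) show ?thesis
    unfolding inner_nondegenerate_def by blast
qed

definition kernel_representative :: "('a \<Rightarrow> 't::ab_group_add) \<Rightarrow> ('a \<Rightarrow> 'a \<Rightarrow> 'r) \<Rightarrow> 'a \<Rightarrow> 'a" where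
  "kernel_representative \<rho> g a =
     (THE \<gamma>. \<gamma> \<in> algebroid_kernel \<rho> \<and> (\<forall>\<eta>\<in>algebroid_kernel \<rho>. g \<gamma> \<eta> = g a \<eta>))"

context
  fixes sA :: "'r::comm_ring_1 \<Rightarrow> 'a::ab_group_add \<Rightarrow> 'a" and \<rho> :: "'a \<Rightarrow> 't::ab_group_add"
    and g :: "'a \<Rightarrow> 'a \<Rightarrow> 'r"
  assumes metric: "algebroid_metric sA g" and nondeg: "inner_nondegenerate sA \<rho> g"
begin

lemma kernel_representative_in_kernel: "kernel_representative \<rho> g a \<in> algebroid_kernel \<rho>"
  and kernel_representative_metric:
    "\<eta> \<in> algebroid_kernel \<rho> \<Longrightarrow> g (kernel_representative \<rho> g a) \<eta> = g a \<eta>"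
  using theI'[OF inner_nondegenerate_ex1_representative[OF metric nondeg, of a]]
  unfolding kernel_representative_def by auto

lemma kernel_representative_unique:
  assumes "\<gamma> \<in> algebroid_kernel \<rho>" and "\<forall>\<eta>\<in>algebroid_kernel \<rho>. g \<gamma> \<eta> = g a \<eta>"
  shows "kernel_representative \<rho> g a = \<gamma>"
  unfolding kernel_representative_def
  by (rule the1_equality[OF inner_nondegenerate_ex1_representative[OF metric nondeg]])
    (use assms in blast)

lemma kernel_representative_module_hom:
  assumes "module_hom sA sT \<rho>"
  shows "module_hom sA sA (kernel_representative \<rho> g)"
proof -
  interpret R: module_hom sA sT \<rho> by (rule assms)
  let ?P = "kernel_representative \<rho> g"
  have in_ker: "?P a \<in> algebroid_kernel \<rho>" for a
    by (rule kernel_representative_in_kernel)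
  from metric have g_add: "g (x + y) z = g x z + g y z" and g_scale: "g (sA f x) z = f * g x z"
    for x y z f unfolding algebroid_metric_def by blast+
  show ?thesis
  proof unfold_locales
    show "?P (x + y) = ?P x + ?P y" for x y
      using in_ker[of x] in_ker[of y]
      by (intro kernel_representative_unique)
        (simp_all add: algebroid_kernel_def R.add g_add kernel_representative_metric)
    show "?P (sA f x) = sA f (?P x)" for f x
      using in_ker[of x]
      by (intro kernel_representative_unique)
        (simp_all add: algebroid_kernel_def R.scale g_scale kernel_representative_metric)
  qed
qed

lemma ordinary_connection_minus_kernel_representative:
  assumes anchor: "module_hom sA sT \<rho>" and s: "ordinary_connection sT sA \<rho> s"
  shows "ordinary_connection sT sA \<rho> (\<lambda>X. s X - kernel_representative \<rho> g (s X))"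
    and "\<forall>X. \<forall>\<gamma>\<in>algebroid_kernel \<rho>. g (s X - kernel_representative \<rho> g (s X)) \<gamma> = 0"
proof -
  interpret R: module_hom sA sT \<rho> by (rule anchor)
  interpret S: module_hom sT sA s using s by (simp add: ordinary_connection_def)
  interpret P: module_hom sA sA "kernel_representative \<rho> g"
    using anchor by (rule kernel_representative_module_hom)
  have "module_hom sT sA (\<lambda>X. s X - kernel_representative \<rho> g (s X))"
    by unfold_locales (simp_all add: S.add S.scale P.add P.scale R.m1.scale_right_diff_distrib)
  moreover have "\<rho> (kernel_representative \<rho> g a) = 0" for a
    using kernel_representative_in_kernel by (simp add: algebroid_kernel_def)
  ultimately show "ordinary_connection sT sA \<rho> (\<lambda>X. s X - kernel_representative \<rho> g (s X))"
    using s by (simp add: ordinary_connection_def R.diff)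
  show "\<forall>X. \<forall>\<gamma>\<in>algebroid_kernel \<rho>. g (s X - kernel_representative \<rho> g (s X)) \<gamma> = 0"
    by (simp add: algebroid_metric_diff_left[OF metric] kernel_representative_metric)
qed

lemma orthogonal_connection_eq:
  assumes anchor: "module_hom sA sT \<rho>"
    and s: "ordinary_connection sT sA \<rho> s" and D: "ordinary_connection sT sA \<rho> D"
    and orth: "\<forall>X. \<forall>\<gamma>\<in>algebroid_kernel \<rho>. g (D X) \<gamma> = 0"
  shows "D X = s X - kernel_representative \<rho> g (s X)"
proof -
  interpret R: module_hom sA sT \<rho> by (rule anchor)
  have "kernel_representative \<rho> g (s X) = s X - D X"
  proof (rule kernel_representative_unique)
    show "s X - D X \<in> algebroid_kernel \<rho>"
      using s D by (simp add: algebroid_kernel_def ordinary_connection_def R.diff)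
    show "\<forall>\<eta>\<in>algebroid_kernel \<rho>. g (s X - D X) \<eta> = g (s X) \<eta>"
      using orth by (simp add: algebroid_metric_diff_left[OF metric])
  qed
  then show ?thesis by simp
qed

end

theorem proposition2p6:
  fixes sT :: "'r::{comm_ring_1,real_algebra_1} \<Rightarrow> 't::ab_group_add \<Rightarrow> 't"
    and act :: "'t \<Rightarrow> 'r \<Rightarrow> 'r" and brT :: "'t \<Rightarrow> 't \<Rightarrow> 't"
    and sA :: "'r \<Rightarrow> 'a::ab_group_add \<Rightarrow> 'a" and brA :: "'a \<Rightarrow> 'a \<Rightarrow> 'a"
    and \<rho> :: "'a \<Rightarrow> 't" and g :: "'a \<Rightarrow> 'a \<Rightarrow> 'r"
  assumes "transitive_lie_algebroid sT act brT sA brA \<rho>"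
    and "algebroid_metric sA g"
    and "inner_nondegenerate sA \<rho> g"
  shows "\<exists>!nabla. ordinary_connection sT sA \<rho> nabla \<and>
           (\<forall>X. \<forall>\<gamma>\<in>algebroid_kernel \<rho>. g (nabla X) \<gamma> = 0)"
proof -
  have anchor: "module_hom sA sT \<rho>"
    using assms(1) by (simp add: transitive_lie_algebroid_def)
  obtain s where s: "ordinary_connection sT sA \<rho> s"
    using assms(1) by (rule ordinary_connection_exists)
  show ?thesis
  proof (rule ex1I[of _ "\<lambda>X. s X - kernel_representative \<rho> g (s X)"])
    show "ordinary_connection sT sA \<rho> (\<lambda>X. s X - kernel_representative \<rho> g (s X)) \<and>
        (\<forall>X. \<forall>\<gamma>\<in>algebroid_kernel \<rho>. g (s X - kernel_representative \<rho> g (s X)) \<gamma> = 0)"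
      using ordinary_connection_minus_kernel_representative[OF assms(2,3) anchor s] by blast
  next
    fix D
    assume "ordinary_connection sT sA \<rho> D \<and> (\<forall>X. \<forall>\<gamma>\<in>algebroid_kernel \<rho>. g (D X) \<gamma> = 0)"
    then show "D = (\<lambda>X. s X - kernel_representative \<rho> g (s X))"
      using orthogonal_connection_eq[OF assms(2,3) anchor s] by blast
  qed
qed

end
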